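(* Let $(G,k)$ be an instance and let $v\in V$ satisfy $|N(v)|>7k$ and $\rho(v)\le \frac{|N(v)|(|N(v)|-1)}{4}$. Then for every feasible solution $X$ with $v\notin X$, the connected component of $G-X$ containing $v$ is a tree.
   Context: Graphs are undirected, without self-loops, possibly with multi-edges. $N(v)$ is the set of vertices adjacent to $v$; $\rho(v)$ is the number of unordered pairs $\{u_1,u_2\}\subseteq N(v)$ joined by at least one edge (parallel edges counted once). A vertex set induces a clique if between any two distinct vertices of it there is exactly one edge, and a tree if it is connected and has no cycle (two parallel edges form a cycle). For an integer $k\ge1$, a feasible solution is a set $X\subseteq V$ with $|X|\le k$ such that every connected component of $G-X$ is a clique or a tree. *)

theory Defs
  imports Complex_Main
begin

text \<open>A finite undirected multigraph without self-loops, given by a vertex set V and an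
  edge-multiplicity function m (m u w = number of parallel edges between u and w).\<close>
definition multigraph :: "'a set \<Rightarrow> ('a \<Rightarrow> 'a \<Rightarrow> nat) \<Rightarrow> bool" where
  "multigraph V m \<longleftrightarrow> finite V \<and> (\<forall>u w. m u w = m w u) \<and> (\<forall>u. m u u = 0)
     \<and> (\<forall>u w. 0 < m u w \<longrightarrow> u \<in> V \<and> w \<in> V)"

definition adj :: "('a \<Rightarrow> 'a \<Rightarrow> nat) \<Rightarrow> 'a \<Rightarrow> 'a \<Rightarrow> bool" where
  "adj m u w \<longleftrightarrow> 0 < m u w"

definition nbhd :: "'a set \<Rightarrow> ('a \<Rightarrow> 'a \<Rightarrow> nat) \<Rightarrow> 'a \<Rightarrow> 'a set" where
  "nbhd V m v = {u \<in> V. adj m v u}"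

definition rho :: "'a set \<Rightarrow> ('a \<Rightarrow> 'a \<Rightarrow> nat) \<Rightarrow> 'a \<Rightarrow> nat" where
  "rho V m v = card {{u1, u2} | u1 u2. u1 \<in> nbhd V m v \<and> u2 \<in> nbhd V m v \<and> u1 \<noteq> u2 \<and> adj m u1 u2}"

definition adj_in :: "'a set \<Rightarrow> ('a \<Rightarrow> 'a \<Rightarrow> nat) \<Rightarrow> 'a \<Rightarrow> 'a \<Rightarrow> bool" where
  "adj_in S m u w \<longleftrightarrow> u \<in> S \<and> w \<in> S \<and> adj m u w"

definition component :: "'a set \<Rightarrow> ('a \<Rightarrow> 'a \<Rightarrow> nat) \<Rightarrow> 'a \<Rightarrow> 'a set" where
  "component S m v = {u. (adj_in S m)\<^sup>*\<^sup>* v u}"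

definition components :: "'a set \<Rightarrow> ('a \<Rightarrow> 'a \<Rightarrow> nat) \<Rightarrow> 'a set set" where
  "components S m = component S m ` S"

definition induces_connected :: "'a set \<Rightarrow> ('a \<Rightarrow> 'a \<Rightarrow> nat) \<Rightarrow> bool" where
  "induces_connected S m \<longleftrightarrow> S \<noteq> {} \<and> (\<forall>a\<in>S. \<forall>b\<in>S. (adj_in S m)\<^sup>*\<^sup>* a b)"

definition induces_clique :: "'a set \<Rightarrow> ('a \<Rightarrow> 'a \<Rightarrow> nat) \<Rightarrow> bool" where
  "induces_clique S m \<longleftrightarrow> (\<forall>a\<in>S. \<forall>b\<in>S. a \<noteq> b \<longrightarrow> m a b = 1)"

text \<open>A cycle in the subgraph induced by S: either two parallel edges (a 2-cycle),
  or a sequence of at least 3 distinct vertices, consecutive ones adjacent, last adjacent to first.\<close>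
definition has_cycle :: "'a set \<Rightarrow> ('a \<Rightarrow> 'a \<Rightarrow> nat) \<Rightarrow> bool" where
  "has_cycle S m \<longleftrightarrow>
     (\<exists>a\<in>S. \<exists>b\<in>S. 2 \<le> m a b) \<or>
     (\<exists>xs. 3 \<le> length xs \<and> distinct xs \<and> set xs \<subseteq> S
        \<and> (\<forall>i. Suc i < length xs \<longrightarrow> adj m (xs ! i) (xs ! Suc i))
        \<and> adj m (last xs) (hd xs))"

definition induces_tree :: "'a set \<Rightarrow> ('a \<Rightarrow> 'a \<Rightarrow> nat) \<Rightarrow> bool" where
  "induces_tree S m \<longleftrightarrow> induces_connected S m \<and> \<not> has_cycle S m"

definition feasible :: "'a set \<Rightarrow> ('a \<Rightarrow> 'a \<Rightarrow> nat) \<Rightarrow> nat \<Rightarrow> 'a set \<Rightarrow> bool" where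
  "feasible V m k X \<longleftrightarrow> X \<subseteq> V \<and> card X \<le> k \<and>
     (\<forall>C\<in>components (V - X) m. induces_clique C m \<or> induces_tree C m)"

end

theory Submission
  imports Defs
begin

text \<open>If the component of \<open>v\<close> in \<open>G - X\<close> were a clique, it would contain every neighbour
  of \<open>v\<close> outside \<open>X\<close>, and these at least \<open>|N(v)| - k\<close> vertices would be pairwise adjacent.
  Hence \<open>\<rho>(v) \<ge> (|N(v)| - k choose 2)\<close>, which exceeds \<open>|N(v)|(|N(v)| - 1)/4\<close>
  as soon as \<open>|N(v)| > 4k\<close>.\<close>

lemma real_choose_two: "real (n choose 2) = real n * (real n - 1) / 2"
proof -
  have "even (n * (n - 1))"
    by (cases "even n") auto
  then show ?thesis
    by (cases n) (auto simp: choose_two real_of_nat_div algebra_simps)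
qed

lemma quarter_pairs_less_choose_two:
  fixes d s k :: nat
  assumes "d \<le> s + k" and "4 * k < d" and "1 \<le> k"
  shows "real d * (real d - 1) / 4 < real (s choose 2)"
proof -
  have "0 \<le> real d * (real d - 4 * real k - 1)"
    using assms(2) by simp
  moreover have "0 < 2 * real k * real k + 2 * real k"
    using assms(3) by (simp add: add_pos_nonneg)
  ultimately have "real d * (real d - 1) < 2 * (real d - real k) * (real d - real k - 1)"
    by (simp add: algebra_simps)
  also have "\<dots> \<le> 2 * real s * (real s - 1)"
    using assms(1,2) by (intro mult_mono) auto
  finally show ?thesis
    by (simp add: real_choose_two)
qed

lemma card_unordered_pairs:
  assumes "finite S"
  shows "card {{u1, u2} | u1 u2. u1 \<in> S \<and> u2 \<in> S \<and> u1 \<noteq> u2} = card S choose 2"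
proof -
  have "{{u1, u2} | u1 u2. u1 \<in> S \<and> u2 \<in> S \<and> u1 \<noteq> u2} = {B. B \<subseteq> S \<and> card B = 2}"
    by (auto simp: card_2_iff)
  then show ?thesis
    using n_subsets[OF assms, of 2] by simp
qed

lemma card_choose_two_le_rho:
  assumes "finite V" and "S \<subseteq> nbhd V m v"
    and adjacent: "\<And>a b. a \<in> S \<Longrightarrow> b \<in> S \<Longrightarrow> a \<noteq> b \<Longrightarrow> adj m a b"
  shows "card S choose 2 \<le> rho V m v"
proof -
  let ?N = "nbhd V m v"
  have "finite ?N"
    using assms(1) by (simp add: nbhd_def)
  have "card S choose 2 = card {{u1, u2} | u1 u2. u1 \<in> S \<and> u2 \<in> S \<and> u1 \<noteq> u2}"
    using finite_subset[OF assms(2) \<open>finite ?N\<close>] by (rule card_unordered_pairs[symmetric])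
  also have "\<dots> \<le> card {{u1, u2} | u1 u2. u1 \<in> ?N \<and> u2 \<in> ?N \<and> u1 \<noteq> u2 \<and> adj m u1 u2}"
  proof (rule card_mono)
    show "finite {{u1, u2} | u1 u2. u1 \<in> ?N \<and> u2 \<in> ?N \<and> u1 \<noteq> u2 \<and> adj m u1 u2}"
      by (rule finite_subset[of _ "Pow ?N"]) (use \<open>finite ?N\<close> in auto)
    show "{{u1, u2} | u1 u2. u1 \<in> S \<and> u2 \<in> S \<and> u1 \<noteq> u2}
      \<subseteq> {{u1, u2} | u1 u2. u1 \<in> ?N \<and> u2 \<in> ?N \<and> u1 \<noteq> u2 \<and> adj m u1 u2}"
      using assms(2) adjacent by blast
  qed
  finally show ?thesis
    unfolding rho_def .
qed

lemma nbhd_Int_subset_component: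
  assumes "v \<in> S"
  shows "nbhd V m v \<inter> S \<subseteq> component S m v"
  using assms by (auto simp: nbhd_def component_def adj_in_def)

lemma induces_clique_adj:
  assumes "induces_clique C m" and "a \<in> C" and "b \<in> C" and "a \<noteq> b"
  shows "adj m a b"
  using assms by (simp add: induces_clique_def adj_def)

theorem mainTheorem3:
  fixes V :: "'a set" and m :: "'a \<Rightarrow> 'a \<Rightarrow> nat" and k :: nat and v :: 'a
  assumes "multigraph V m" and "1 \<le> k" and "v \<in> V"
    and "card (nbhd V m v) > 7 * k"
    and "real (rho V m v) \<le> real (card (nbhd V m v)) * (real (card (nbhd V m v)) - 1) / 4"
  shows "\<forall>X. feasible V m k X \<and> v \<notin> X \<longrightarrow> induces_tree (component (V - X) m v) m"
proof (intro allI impI)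
  fix X assume X: "feasible V m k X \<and> v \<notin> X"
  let ?C = "component (V - X) m v" and ?N = "nbhd V m v"
  have "finite V"
    using assms(1) by (simp add: multigraph_def)
  have "?C \<in> components (V - X) m"
    using X assms(3) by (simp add: components_def)
  then have "induces_clique ?C m \<or> induces_tree ?C m"
    using X by (simp add: feasible_def)
  moreover have "\<not> induces_clique ?C m"
  proof
    assume "induces_clique ?C m"
    then have "card (?N \<inter> (V - X)) choose 2 \<le> rho V m v"
      using nbhd_Int_subset_component[of v "V - X" V m] X assms(3) \<open>finite V\<close>
      by (intro card_choose_two_le_rho) (auto intro: induces_clique_adj)
    moreover have few_deleted: "card ?N \<le> card (?N \<inter> (V - X)) + k"
    proof -
      have "?N \<inter> (V - X) = ?N - X"
        by (auto simp: nbhd_def)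
      moreover have "finite X" "card X \<le> k"
        using X \<open>finite V\<close> finite_subset by (auto simp: feasible_def)
      ultimately show ?thesis
        using diff_card_le_card_Diff[of X ?N] by simp
    qed
    moreover have "real (card ?N) * (real (card ?N) - 1) / 4 < real (card (?N \<inter> (V - X)) choose 2)"
      by (rule quarter_pairs_less_choose_two) (use few_deleted assms(2,4) in auto)
    ultimately show False
      using assms(5) by linarith
  qed
  ultimately show "induces_tree ?C m"
    by blast
qed

end
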